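(* Let $\mathscr{S}\subset\mathbb{Z}^2$ be a finite step set, $\theta\in[0,\pi/2)$, and $\delta>0$. Then there exists a context-free grammar with $\mathcal{O}(1/\delta)$ non-terminals and $\mathcal{O}(1/\delta^2)$ rules which generates a $\delta$-rational approximation $\mathrm{walks}(H_{\theta_r},\mathscr{S})$ of $\mathrm{walks}(H_\theta,\mathscr{S})$.
   Context: $H_\theta=\{(x,y):x\sin\theta+y\cos\theta\ge0\}$; $\mathrm{walks}(C,\mathscr{S})$ is the set of walks $x_0=(0,0),x_1,\dots,x_n$ ($n\ge0$) with $x_{j+1}-x_j\in\mathscr{S}$ and all $x_i\in C$. A half-plane model $\mathrm{walks}(H_{\theta_r},\mathscr{S})$ is a $\delta$-rational approximation of $\mathrm{walks}(H_\theta,\mathscr{S})$ if $\tan\theta_r\in\mathbb{Q}$ and $|\tan\theta-\tan\theta_r|\le\delta$. The grammar generates the walks as words over the alphabet $\mathscr{S}$. *)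

theory Defs
  imports Complex_Main
begin

type_synonym step = "int \<times> int"

definition H :: "real \<Rightarrow> step set" where
  "H \<theta> = {(x, y). real_of_int x * sin \<theta> + real_of_int y * cos \<theta> \<ge> 0}"

definition endpoint :: "step list \<Rightarrow> step" where
  "endpoint w = ((\<Sum>s\<leftarrow>w. fst s), (\<Sum>s\<leftarrow>w. snd s))"

definition walks :: "step set \<Rightarrow> step set \<Rightarrow> step list set" where
  "walks C S = {w. set w \<subseteq> S \<and> (\<forall>k \<le> length w. endpoint (take k w) \<in> C)}"

datatype ('n, 't) sym = NT 'n | Tm 't

inductive cfg_step :: "('n \<times> ('n, 't) sym list) set \<Rightarrow> ('n, 't) sym list \<Rightarrow> ('n, 't) sym list \<Rightarrow> bool"
  for R where
  "(A, rhs) \<in> R \<Longrightarrow> cfg_step R (u @ [NT A] @ v) (u @ rhs @ v)"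

definition cfg_lang :: "('n \<times> ('n, 't) sym list) set \<Rightarrow> 'n \<Rightarrow> 't list set" where
  "cfg_lang R A = {w. (cfg_step R)\<^sup>*\<^sup>* [NT A] (map Tm w)}"

definition is_cfg :: "'n set \<Rightarrow> 't set \<Rightarrow> ('n \<times> ('n, 't) sym list) set \<Rightarrow> 'n \<Rightarrow> bool" where
  "is_cfg N T R A \<longleftrightarrow> finite N \<and> finite R \<and> A \<in> N \<and>
     (\<forall>(B, rhs) \<in> R. B \<in> N \<and> (\<forall>x \<in> set rhs. case x of NT C \<Rightarrow> C \<in> N | Tm t \<Rightarrow> t \<in> T))"

end

theory Submission
  imports Defs
begin

text \<open>
  For a rational slope \<open>tan \<theta>r = p / q\<close> with \<open>q > 0\<close>, a point lies in \<open>H \<theta>r\<close> iff its height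
  \<open>p x + q y\<close> is nonnegative, so the walks are exactly the words whose prefix heights stay
  nonnegative.  Taking \<open>q = \<lceil>1/\<delta>\<rceil>\<close> and \<open>p = \<lfloor>q tan \<theta>\<rfloor>\<close> gives a \<delta>-approximation in which
  every step changes the height by at most \<open>M = O(1/\<delta>)\<close>.

  These words are generated by a grammar whose nonterminals are indexed by heights in \<open>[0, M]\<close>:
  \<open>meanders c\<close> (nonnegative walks started at height \<open>c\<close>), \<open>descents d\<close> (walks from height \<open>d\<close>
  that first reach \<open>0\<close> at their end) and \<open>ascents e\<close> (nonnegative walks from \<open>0\<close> to \<open>e\<close>).
  Cutting a nonnegative walk at the first time it attains its minimum \<open>m\<close> splits it into a
  descent followed by an ascent, both shifted by \<open>m\<close>.  Applied to a descent with its last step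
  removed, and to an ascent with its first step removed, this yields rules indexed by a height,
  a step and a minimum: \<open>O(M\<^sup>2)\<close> rules on \<open>3M + 3\<close> nonterminals.
\<close>

fun sym_lang :: "('n \<Rightarrow> 't list set) \<Rightarrow> ('n, 't) sym \<Rightarrow> 't list set" where
  "sym_lang L (NT A) = L A"
| "sym_lang L (Tm t) = {[t]}"

fun sf_lang :: "('n \<Rightarrow> 't list set) \<Rightarrow> ('n, 't) sym list \<Rightarrow> 't list set" where
  "sf_lang L [] = {[]}"
| "sf_lang L (x # xs) = {u @ v | u v. u \<in> sym_lang L x \<and> v \<in> sf_lang L xs}"

lemma sf_lang_append:
  "sf_lang L (xs @ ys) = {u @ v | u v. u \<in> sf_lang L xs \<and> v \<in> sf_lang L ys}"
proof (induction xs)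
  case Nil
  then show ?case by auto
next
  case (Cons x xs)
  show ?case
  proof
    show "sf_lang L ((x # xs) @ ys) \<subseteq> {u @ v |u v. u \<in> sf_lang L (x # xs) \<and> v \<in> sf_lang L ys}"
      using Cons by auto (metis append.assoc)
    show "{u @ v |u v. u \<in> sf_lang L (x # xs) \<and> v \<in> sf_lang L ys} \<subseteq> sf_lang L ((x # xs) @ ys)"
      using Cons by auto blast
  qed
qed

lemma sf_lang_map_Tm: "w \<in> sf_lang L (map Tm w)"
  by (induction w) auto

lemma sf_lang_cfg_step:
  assumes closed: "\<forall>(B, rhs) \<in> R. sf_lang L rhs \<subseteq> L B"
    and "cfg_step R \<alpha> \<beta>" and "w \<in> sf_lang L \<beta>"
  shows "w \<in> sf_lang L \<alpha>"
  using \<open>cfg_step R \<alpha> \<beta>\<close>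
proof cases
  case (1 A rhs u v)
  with \<open>w \<in> sf_lang L \<beta>\<close> obtain w1 w2 w3 where
    "w = w1 @ w2 @ w3" "w1 \<in> sf_lang L u" "w2 \<in> sf_lang L rhs" "w3 \<in> sf_lang L v"
    by (auto simp: sf_lang_append)
  moreover have "w2 \<in> L A"
    using closed \<open>(A, rhs) \<in> R\<close> \<open>w2 \<in> sf_lang L rhs\<close> by auto
  ultimately show ?thesis
    using 1 by (auto simp: sf_lang_append)
qed

lemma cfg_lang_subset:
  assumes closed: "\<forall>(B, rhs) \<in> R. sf_lang L rhs \<subseteq> L B"
  shows "cfg_lang R A \<subseteq> L A"
proof
  fix w
  assume "w \<in> cfg_lang R A"
  then have "(cfg_step R)\<^sup>*\<^sup>* [NT A] (map Tm w)"
    by (simp add: cfg_lang_def)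
  then have "w \<in> sf_lang L [NT A]"
    by (induction rule: converse_rtranclp_induct)
       (auto intro: sf_lang_map_Tm sf_lang_cfg_step[OF closed])
  then show "w \<in> L A"
    by simp
qed

lemma cfg_step_context: "cfg_step R \<alpha> \<beta> \<Longrightarrow> cfg_step R (u @ \<alpha> @ v) (u @ \<beta> @ v)"
proof (induction rule: cfg_step.induct)
  case (1 A rhs a b)
  from cfg_step.intros[OF 1, of "u @ a" "b @ v"] show ?case
    by simp
qed

lemma cfg_steps_context:
  "(cfg_step R)\<^sup>*\<^sup>* \<alpha> \<beta> \<Longrightarrow> (cfg_step R)\<^sup>*\<^sup>* (u @ \<alpha> @ v) (u @ \<beta> @ v)"
  by (induction rule: rtranclp_induct) (auto intro: rtranclp.rtrancl_into_rtrancl cfg_step_context)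

lemma cfg_steps_append:
  assumes "(cfg_step R)\<^sup>*\<^sup>* \<alpha> (map Tm u)" and "(cfg_step R)\<^sup>*\<^sup>* \<beta> (map Tm v)"
  shows "(cfg_step R)\<^sup>*\<^sup>* (\<alpha> @ \<beta>) (map Tm (u @ v))"
  using cfg_steps_context[OF assms(1), of "[]" \<beta>] cfg_steps_context[OF assms(2), of "map Tm u" "[]"]
  by simp

lemma cfg_steps_sf_lang:
  assumes "w \<in> sf_lang (cfg_lang R) \<alpha>"
  shows "(cfg_step R)\<^sup>*\<^sup>* \<alpha> (map Tm w)"
  using assms
proof (induction \<alpha> arbitrary: w)
  case (Cons x \<alpha>)
  then obtain u v where "w = u @ v" "u \<in> sym_lang (cfg_lang R) x" "v \<in> sf_lang (cfg_lang R) \<alpha>"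
    by auto
  moreover have "(cfg_step R)\<^sup>*\<^sup>* [x] (map Tm u)"
    using \<open>u \<in> sym_lang (cfg_lang R) x\<close> by (cases x) (auto simp: cfg_lang_def)
  ultimately show ?case
    using cfg_steps_append[of R "[x]" u \<alpha> v] Cons.IH by simp
qed simp

lemma cfg_lang_rule:
  assumes "(A, rhs) \<in> R" and "w \<in> sf_lang (cfg_lang R) rhs"
  shows "w \<in> cfg_lang R A"
proof -
  have "cfg_step R ([] @ [NT A] @ []) ([] @ rhs @ [])"
    using assms(1) by (rule cfg_step.intros)
  then show ?thesis
    using cfg_steps_sf_lang[OF assms(2)] by (simp add: cfg_lang_def converse_rtranclp_into_rtranclp)
qed

definition height :: "('a \<Rightarrow> int) \<Rightarrow> int \<Rightarrow> 'a list \<Rightarrow> nat \<Rightarrow> int" where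
  "height h a w k = a + sum_list (map h (take k w))"

definition meanders :: "('a \<Rightarrow> int) \<Rightarrow> 'a set \<Rightarrow> int \<Rightarrow> 'a list set" where
  "meanders h S c = {w. set w \<subseteq> S \<and> (\<forall>k \<le> length w. 0 \<le> height h c w k)}"

definition descents :: "('a \<Rightarrow> int) \<Rightarrow> 'a set \<Rightarrow> int \<Rightarrow> 'a list set" where
  "descents h S d =
     {w. set w \<subseteq> S \<and> height h d w (length w) = 0 \<and> (\<forall>k < length w. 1 \<le> height h d w k)}"

definition ascents :: "('a \<Rightarrow> int) \<Rightarrow> 'a set \<Rightarrow> int \<Rightarrow> 'a list set" where
  "ascents h S e =
     {w. set w \<subseteq> S \<and> height h 0 w (length w) = e \<and> (\<forall>k \<le> length w. 0 \<le> height h 0 w k)}"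

lemma height_0 [simp]: "height h a w 0 = a"
  by (simp add: height_def)

lemma height_Cons_Suc [simp]: "height h a (s # w) (Suc k) = height h (a + h s) w k"
  by (simp add: height_def)

lemma height_shift: "height h (a + b) w k = b + height h a w k"
  by (simp add: height_def)

lemma height_append_left: "k \<le> length u \<Longrightarrow> height h a (u @ v) k = height h a u k"
  by (simp add: height_def)

lemma height_append_right:
  "height h a (u @ v) (length u + j) = height h (height h a u (length u)) v j"
  by (simp add: height_def)

lemma height_take: "k \<le> n \<Longrightarrow> height h a (take n w) k = height h a w k"
  by (simp add: height_def min_def)

lemma height_snoc_length: "height h a (w @ [s]) (Suc (length w)) = height h a w (length w) + h s"
  by (simp add: height_def)

lemma height_append_cases:
  assumes "\<And>k. k \<le> length u \<Longrightarrow> P (height h a u k)"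
    and "\<And>j. j \<le> length v \<Longrightarrow> P (height h (height h a u (length u)) v j)"
    and "k \<le> length (u @ v)"
  shows "P (height h a (u @ v) k)"
proof (cases "k \<le> length u")
  case True
  then show ?thesis
    using assms(1) by (simp add: height_append_left)
next
  case False
  then obtain j where "k = length u + j" "j \<le> length v"
    using assms(3) by (metis le_add_diff_inverse length_append nat_le_linear add_le_cancel_left)
  then show ?thesis
    using assms(2) by (simp add: height_append_right)
qed

lemma descents_height_nonneg: "w \<in> descents h S d \<Longrightarrow> k \<le> length w \<Longrightarrow> 0 \<le> height h d w k"
  unfolding descents_def by (cases "k = length w") (auto dest: order_le_neq_trans)

lemma ascents_subset_meanders: "ascents h S e \<subseteq> meanders h S 0"
  by (auto simp: ascents_def meanders_def)

lemma meanders_mono: "c \<le> c' \<Longrightarrow> meanders h S c \<subseteq> meanders h S c'"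
  unfolding meanders_def using height_shift[of h c "c' - c"] by fastforce

lemma meanders_Cons:
  assumes "s \<in> S" "v \<in> meanders h S (c + h s)" "0 \<le> c"
  shows "s # v \<in> meanders h S c"
  unfolding meanders_def
proof (intro CollectI conjI allI impI)
  show "set (s # v) \<subseteq> S"
    using assms by (auto simp: meanders_def)
  fix k
  assume "k \<le> length (s # v)"
  then show "0 \<le> height h c (s # v) k"
    using assms by (cases k) (auto simp: meanders_def)
qed

lemma Cons_meanders_0:
  assumes "s # w \<in> meanders h S 0"
  shows "s \<in> S" "0 \<le> h s" "w \<in> meanders h S (h s)"
  using assms unfolding meanders_def by (auto dest: spec[of _ "Suc _"])

lemma descent_append_meander:
  assumes "u \<in> descents h S c" "v \<in> meanders h S 0"
  shows "u @ v \<in> meanders h S c"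
  using assms height_append_cases[of u "\<lambda>x. 0 \<le> x" h c v] descents_height_nonneg[OF assms(1)]
  unfolding meanders_def descents_def by auto

lemma descent_ascent_heights:
  assumes u: "u \<in> descents h S x" and v: "v \<in> ascents h S y" and "0 \<le> m"
  shows "\<And>k. k \<le> length (u @ v) \<Longrightarrow> m \<le> height h (x + m) (u @ v) k"
    and "height h (x + m) (u @ v) (length (u @ v)) = y + m"
proof -
  have end_u: "height h (x + m) u (length u) = m"
    using u by (simp add: height_shift descents_def)
  show "m \<le> height h (x + m) (u @ v) k" if "k \<le> length (u @ v)" for k
  proof (rule height_append_cases[OF _ _ that])
    show "m \<le> height h (x + m) u k" if "k \<le> length u" for k
      using descents_height_nonneg[OF u that] by (simp add: height_shift)
    show "m \<le> height h (height h (x + m) u (length u)) v j" if "j \<le> length v" for j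
      using v that height_shift[of h 0 m v j] by (simp add: end_u ascents_def)
  qed
  show "height h (x + m) (u @ v) (length (u @ v)) = y + m"
    using u v by (simp add: descents_def ascents_def height_def)
qed

lemma descent_ascent_snoc:
  assumes u: "u \<in> descents h S (d - 1 - m)" and v: "v \<in> ascents h S (- h s - 1 - m)"
    and "s \<in> S" "0 \<le> m"
  shows "u @ v @ [s] \<in> descents h S d"
proof -
  have shift: "height h d (u @ v) k = 1 + height h (d - 1 - m + m) (u @ v) k" for k
    using height_shift[of h "d - 1" 1] by simp
  note heights = descent_ascent_heights[OF u v \<open>0 \<le> m\<close>]
  have "height h d (u @ v @ [s]) k \<ge> 1" if "k < length (u @ v @ [s])" for k
    using that heights(1)[of k] \<open>0 \<le> m\<close> height_append_left[of k "u @ v" h d "[s]"]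
    by (simp add: shift)
  moreover have "height h d (u @ v @ [s]) (length (u @ v @ [s])) = 0"
    using height_snoc_length[of h d "u @ v" s] heights(2) by (simp add: shift)
  moreover have "set (u @ v @ [s]) \<subseteq> S"
    using u v \<open>s \<in> S\<close> by (auto simp: descents_def ascents_def)
  ultimately show ?thesis
    by (simp add: descents_def)
qed

lemma Cons_descent_ascent:
  assumes u: "u \<in> descents h S (h s - m)" and v: "v \<in> ascents h S (e - m)"
    and "s \<in> S" "0 \<le> m"
  shows "s # u @ v \<in> ascents h S e"
proof -
  note heights = descent_ascent_heights[OF u v \<open>0 \<le> m\<close>]
  have "0 \<le> height h 0 (s # u @ v) k" if "k \<le> length (s # u @ v)" for k
    using that heights(1) \<open>0 \<le> m\<close> by (cases k) force+
  moreover have "set (s # u @ v) \<subseteq> S"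
    using u v \<open>s \<in> S\<close> by (auto simp: descents_def ascents_def)
  ultimately show ?thesis
    using heights(2) by (simp add: ascents_def)
qed

lemma split_at_minimum:
  assumes S: "set w \<subseteq> S" and nonneg: "\<forall>k \<le> length w. 0 \<le> height h a w k"
  obtains m u v where "0 \<le> m" "\<forall>k \<le> length w. m \<le> height h a w k" "w = u @ v"
    "u \<in> descents h S (a - m)" "v \<in> ascents h S (height h a w (length w) - m)"
proof -
  define m where "m = Min (height h a w ` {..length w})"
  have m_le: "m \<le> height h a w k" if "k \<le> length w" for k
    using that by (simp add: m_def)
  have "m \<in> height h a w ` {..length w}"
    unfolding m_def by (rule Min_in) auto
  then have ex: "\<exists>k. k \<le> length w \<and> height h a w k = m"
    by auto
  define t where "t = (LEAST k. k \<le> length w \<and> height h a w k = m)"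
  have t: "t \<le> length w" "height h a w t = m"
    using LeastI_ex[OF ex] by (simp_all add: t_def)
  have before_t: "height h a w k \<noteq> m" if "k < t" for k
    using not_less_Least[of k "\<lambda>k. k \<le> length w \<and> height h a w k = m"] that t(1)
    by (simp add: t_def)
  define u where "u = take t w"
  define v where "v = drop t w"
  have len_u: "length u = t"
    using t(1) by (simp add: u_def)
  have height_u: "height h (a - m) u k = height h a w k - m" if "k \<le> t" for k
    using that height_take[of k t h "a - m" w] height_shift[of h "a - m" m w k] by (simp add: u_def)
  have u: "u \<in> descents h S (a - m)"
    unfolding descents_def
  proof (intro CollectI conjI allI impI)
    show "set u \<subseteq> S"
      using S by (auto simp: u_def dest: in_set_takeD)
    show "height h (a - m) u (length u) = 0"
      using height_u[of t] t by (simp add: len_u)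
    fix k
    assume "k < length u"
    then show "1 \<le> height h (a - m) u k"
      using before_t[of k] m_le[of k] height_u[of k] t(1) by (simp add: len_u)
  qed
  have uv: "w = u @ v"
    by (simp add: u_def v_def)
  have height_v: "height h 0 v j = height h a w (t + j) - m" for j
  proof -
    have "height h a w (t + j) = height h (height h a u (length u)) v j"
      using height_append_right[of h a u v j] by (simp add: uv len_u)
    also have "height h a u (length u) = m"
      using t by (simp add: len_u u_def height_take)
    finally show ?thesis
      by (simp add: height_def)
  qed
  have v: "v \<in> ascents h S (height h a w (length w) - m)"
    unfolding ascents_def
  proof (intro CollectI conjI allI impI)
    show "set v \<subseteq> S"
      using S by (auto simp: v_def dest: in_set_dropD)
    show "height h 0 v (length v) = height h a w (length w) - m"
      using t(1) height_v[of "length v"] by (simp add: v_def)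
    fix j
    assume "j \<le> length v"
    then show "0 \<le> height h 0 v j"
      using m_le[of "t + j"] t(1) height_v[of j] by (simp add: v_def)
  qed
  have "0 \<le> m"
    using nonneg t by auto
  then show thesis
    using that m_le uv u v by blast
qed

lemma descents_split:
  assumes w: "w \<in> descents h S d" and "1 \<le> d"
  obtains u v s m where "w = u @ v @ [s]" "s \<in> S" "0 \<le> m" "m \<le> d - 1" "m \<le> - h s - 1"
    "u \<in> descents h S (d - 1 - m)" "v \<in> ascents h S (- h s - 1 - m)"
proof -
  have "w \<noteq> []"
    using w \<open>1 \<le> d\<close> by (auto simp: descents_def)
  then obtain w' s where ws: "w = w' @ [s]"
    by (metis rev_exhaust)
  have "s \<in> S" "set w' \<subseteq> S"
    using w ws by (auto simp: descents_def)
  have "0 \<le> height h (d - 1) w' k" if "k \<le> length w'" for k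
  proof -
    have "1 \<le> height h d w k"
      using w that ws by (simp add: descents_def)
    then show ?thesis
      using that ws height_append_left[of k w' h d "[s]"] height_shift[of h "d - 1" 1 w' k] by simp
  qed
  then obtain m u v where m: "0 \<le> m" "\<forall>k \<le> length w'. m \<le> height h (d - 1) w' k"
    and "w' = u @ v" "u \<in> descents h S (d - 1 - m)"
    and v: "v \<in> ascents h S (height h (d - 1) w' (length w') - m)"
    using split_at_minimum[OF \<open>set w' \<subseteq> S\<close>] by blast
  moreover have "height h (d - 1) w' (length w') = - h s - 1"
    using w ws height_snoc_length[of h d w' s] by (simp add: descents_def height_def)
  ultimately show thesis
    using that ws \<open>s \<in> S\<close> spec[OF m(2), of 0] spec[OF m(2), of "length w'"] by auto
qed

lemma ascents_split:
  assumes w: "w \<in> ascents h S e" and "w \<noteq> []"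
  obtains s u v m where "w = s # u @ v" "s \<in> S" "0 \<le> m" "m \<le> h s" "m \<le> e"
    "u \<in> descents h S (h s - m)" "v \<in> ascents h S (e - m)"
proof -
  obtain s w' where ws: "w = s # w'"
    using \<open>w \<noteq> []\<close> by (cases w) auto
  have "s \<in> S" "set w' \<subseteq> S"
    using w ws by (auto simp: ascents_def)
  have "0 \<le> height h (h s) w' k" if "k \<le> length w'" for k
    using w that ws by (auto simp: ascents_def dest: spec[of _ "Suc k"])
  then obtain m u v where m: "0 \<le> m" "\<forall>k \<le> length w'. m \<le> height h (h s) w' k"
    and "w' = u @ v" "u \<in> descents h S (h s - m)"
    and v: "v \<in> ascents h S (height h (h s) w' (length w') - m)"
    using split_at_minimum[OF \<open>set w' \<subseteq> S\<close>] by blast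
  moreover have "height h (h s) w' (length w') = e"
    using w ws by (simp add: ascents_def)
  ultimately show thesis
    using that ws \<open>s \<in> S\<close> spec[OF m(2), of 0] spec[OF m(2), of "length w'"] by auto
qed

lemma meanders_split:
  assumes w: "w \<in> meanders h S c" and "1 \<le> c"
  shows "w \<in> meanders h S (c - 1) \<or>
    (\<exists>u v. w = u @ v \<and> u \<noteq> [] \<and> u \<in> descents h S c \<and> v \<in> meanders h S 0)"
proof (cases "\<forall>k \<le> length w. 1 \<le> height h c w k")
  case True
  then have "w \<in> meanders h S (c - 1)"
    using w height_shift[of h "c - 1" 1 w] by (simp add: meanders_def)
  then show ?thesis ..
next
  case False
  then obtain k0 where k0: "k0 \<le> length w" "height h c w k0 \<le> 0"
    by auto
  obtain m u v where "0 \<le> m" "\<forall>k \<le> length w. m \<le> height h c w k" "w = u @ v"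
    "u \<in> descents h S (c - m)" "v \<in> ascents h S (height h c w (length w) - m)"
    using w split_at_minimum[of w S h c] unfolding meanders_def by blast
  moreover from this(1,2) k0 have "m = 0"
    by force
  moreover have "[] \<notin> descents h S c"
    using \<open>1 \<le> c\<close> by (simp add: descents_def)
  ultimately show ?thesis
    using ascents_subset_meanders by fastforce
qed

definition Q_nt :: "int \<Rightarrow> nat" where "Q_nt c = 3 * nat c"
definition D_nt :: "int \<Rightarrow> nat" where "D_nt d = 3 * nat d + 1"
definition U_nt :: "int \<Rightarrow> nat" where "U_nt e = 3 * nat e + 2"

definition nt_lang :: "('a \<Rightarrow> int) \<Rightarrow> 'a set \<Rightarrow> nat \<Rightarrow> 'a list set" where
  "nt_lang h S n =
     (if n mod 3 = 0 then meanders h S (int (n div 3))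
      else if n mod 3 = 1 then descents h S (int (n div 3))
      else ascents h S (int (n div 3)))"

lemma nt_lang_Q_nt: "0 \<le> c \<Longrightarrow> nt_lang h S (Q_nt c) = meanders h S c"
  by (simp add: nt_lang_def Q_nt_def)

lemma nt_lang_D_nt: "0 \<le> d \<Longrightarrow> nt_lang h S (D_nt d) = descents h S d"
proof -
  have "(3 * n + 1) mod 3 = 1" "(3 * n + 1) div 3 = n" for n :: nat
    by presburger+
  then show "0 \<le> d \<Longrightarrow> ?thesis"
    by (simp add: nt_lang_def D_nt_def)
qed

lemma nt_lang_U_nt: "0 \<le> e \<Longrightarrow> nt_lang h S (U_nt e) = ascents h S e"
proof -
  have "(3 * n + 2) mod 3 = 2" "(3 * n + 2) div 3 = n" for n :: nat
    by presburger+
  then show "0 \<le> e \<Longrightarrow> ?thesis"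
    by (simp add: nt_lang_def U_nt_def)
qed

definition walk_grammar :: "('a \<Rightarrow> int) \<Rightarrow> 'a set \<Rightarrow> int \<Rightarrow> (nat \<times> (nat, 'a) sym list) set" where
  "walk_grammar h S M =
     {(Q_nt 0, []), (D_nt 0, []), (U_nt 0, [])}
   \<union> {(Q_nt 0, [Tm s, NT (Q_nt (h s))]) | s. s \<in> S \<and> 0 \<le> h s}
   \<union> {(Q_nt c, [NT (D_nt c), NT (Q_nt 0)]) | c. c \<in> {1..M}}
   \<union> {(Q_nt c, [NT (Q_nt (c - 1))]) | c. c \<in> {1..M}}
   \<union> {(D_nt d, [NT (D_nt (d - 1 - m)), NT (U_nt (- h s - 1 - m)), Tm s]) | d s m.
        d \<in> {1..M} \<and> s \<in> S \<and> 0 \<le> m \<and> m \<le> d - 1 \<and> m \<le> - h s - 1}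
   \<union> {(U_nt e, [Tm s, NT (D_nt (h s - m)), NT (U_nt (e - m))]) | e s m.
        e \<in> {0..M} \<and> s \<in> S \<and> 0 \<le> m \<and> m \<le> h s \<and> m \<le> e}"

lemma walk_grammar_closed:
  "\<forall>(B, rhs) \<in> walk_grammar h S M. sf_lang (nt_lang h S) rhs \<subseteq> nt_lang h S B"
proof (intro ballI subsetI, clarify)
  fix B rhs w
  assume rule: "(B, rhs) \<in> walk_grammar h S M" and w: "w \<in> sf_lang (nt_lang h S) rhs"
  show "w \<in> nt_lang h S B"
    using rule unfolding walk_grammar_def
  proof (elim UnE insertE emptyE CollectE exE conjE)
    fix s
    assume "(B, rhs) = (Q_nt 0, [Tm s, NT (Q_nt (h s))])" "s \<in> S" "0 \<le> h s"
    then show ?thesis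
      using w by (auto simp: nt_lang_Q_nt intro: meanders_Cons)
  next
    fix c
    assume "(B, rhs) = (Q_nt c, [NT (D_nt c), NT (Q_nt 0)])" "c \<in> {1..M}"
    then show ?thesis
      using w by (auto simp: nt_lang_Q_nt nt_lang_D_nt intro: descent_append_meander)
  next
    fix c
    assume "(B, rhs) = (Q_nt c, [NT (Q_nt (c - 1))])" "c \<in> {1..M}"
    then show ?thesis
      using w meanders_mono[of "c - 1" c h S] by (auto simp: nt_lang_Q_nt)
  next
    fix d s m
    assume "(B, rhs) = (D_nt d, [NT (D_nt (d - 1 - m)), NT (U_nt (- h s - 1 - m)), Tm s])"
      "s \<in> S" "0 \<le> m" "m \<le> d - 1" "m \<le> - h s - 1" "d \<in> {1..M}"
    then show ?thesis
      using w by (auto simp: nt_lang_D_nt nt_lang_U_nt intro: descent_ascent_snoc)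
  next
    fix e s m
    assume "(B, rhs) = (U_nt e, [Tm s, NT (D_nt (h s - m)), NT (U_nt (e - m))])"
      "s \<in> S" "0 \<le> m" "m \<le> h s" "m \<le> e" "e \<in> {0..M}"
    then show ?thesis
      using w by (auto simp: nt_lang_D_nt nt_lang_U_nt intro: Cons_descent_ascent)
  qed (use w in \<open>auto simp: nt_lang_def Q_nt_def D_nt_def U_nt_def
                                meanders_def descents_def ascents_def\<close>)
qed

lemma descents_ascents_in_walk_grammar:
  assumes bound: "\<forall>s \<in> S. \<bar>h s\<bar> \<le> M"
  shows "(\<forall>d. w \<in> descents h S d \<longrightarrow> 0 \<le> d \<longrightarrow> d \<le> M \<longrightarrow> w \<in> cfg_lang (walk_grammar h S M) (D_nt d)) \<and>
    (\<forall>e. w \<in> ascents h S e \<longrightarrow> 0 \<le> e \<longrightarrow> e \<le> M \<longrightarrow> w \<in> cfg_lang (walk_grammar h S M) (U_nt e))"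
proof (induction "length w" arbitrary: w rule: less_induct)
  case less
  let ?G = "walk_grammar h S M"
  have descent: "w \<in> cfg_lang ?G (D_nt d)" if w: "w \<in> descents h S d" and "0 \<le> d" "d \<le> M" for d
  proof (cases "d = 0")
    case True
    then have "w = []"
      using w by (cases w) (auto simp: descents_def dest: spec[of _ 0])
    show ?thesis
      unfolding True \<open>w = []\<close> by (rule cfg_lang_rule) (auto simp: walk_grammar_def)
  next
    case False
    with \<open>0 \<le> d\<close> have "1 \<le> d"
      by simp
    obtain u v s m where uv: "w = u @ v @ [s]" and "s \<in> S" "0 \<le> m" "m \<le> d - 1" "m \<le> - h s - 1"
      and u: "u \<in> descents h S (d - 1 - m)" and v: "v \<in> ascents h S (- h s - 1 - m)"
      by (rule descents_split[OF w \<open>1 \<le> d\<close>])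
    have "\<bar>h s\<bar> \<le> M"
      using bound \<open>s \<in> S\<close> by blast
    then have "u \<in> cfg_lang ?G (D_nt (d - 1 - m))" "v \<in> cfg_lang ?G (U_nt (- h s - 1 - m))"
      using less(1)[of u] less(1)[of v] u v uv \<open>0 \<le> m\<close> \<open>m \<le> d - 1\<close> \<open>m \<le> - h s - 1\<close> \<open>d \<le> M\<close>
      by auto
    moreover have "(D_nt d, [NT (D_nt (d - 1 - m)), NT (U_nt (- h s - 1 - m)), Tm s]) \<in> ?G"
      unfolding walk_grammar_def atLeastAtMost_iff
      using \<open>1 \<le> d\<close> \<open>d \<le> M\<close> \<open>s \<in> S\<close> \<open>0 \<le> m\<close> \<open>m \<le> d - 1\<close> \<open>m \<le> - h s - 1\<close> by blast
    ultimately show ?thesis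
      unfolding uv by (elim cfg_lang_rule) force
  qed
  have ascent: "w \<in> cfg_lang ?G (U_nt e)" if w: "w \<in> ascents h S e" and "0 \<le> e" "e \<le> M" for e
  proof (cases "w = []")
    case True
    then have "e = 0"
      using w by (simp add: ascents_def)
    show ?thesis
      unfolding True \<open>e = 0\<close> by (rule cfg_lang_rule) (auto simp: walk_grammar_def)
  next
    case False
    obtain s u v m where uv: "w = s # u @ v" and "s \<in> S" "0 \<le> m" "m \<le> h s" "m \<le> e"
      and u: "u \<in> descents h S (h s - m)" and v: "v \<in> ascents h S (e - m)"
      by (rule ascents_split[OF w False])
    have "\<bar>h s\<bar> \<le> M"
      using bound \<open>s \<in> S\<close> by blast
    then have "u \<in> cfg_lang ?G (D_nt (h s - m))" "v \<in> cfg_lang ?G (U_nt (e - m))"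
      using less(1)[of u] less(1)[of v] u v uv \<open>m \<le> h s\<close> \<open>m \<le> e\<close> \<open>0 \<le> m\<close> \<open>e \<le> M\<close>
      by auto
    moreover have "(U_nt e, [Tm s, NT (D_nt (h s - m)), NT (U_nt (e - m))]) \<in> ?G"
      unfolding walk_grammar_def atLeastAtMost_iff
      using \<open>0 \<le> e\<close> \<open>e \<le> M\<close> \<open>s \<in> S\<close> \<open>0 \<le> m\<close> \<open>m \<le> h s\<close> \<open>m \<le> e\<close> by blast
    ultimately show ?thesis
      unfolding uv by (elim cfg_lang_rule) force
  qed
  show ?case
    using descent ascent by blast
qed

lemma meanders_in_walk_grammar:
  assumes bound: "\<forall>s \<in> S. \<bar>h s\<bar> \<le> M"
  shows "w \<in> meanders h S c \<Longrightarrow> 0 \<le> c \<Longrightarrow> c \<le> M \<Longrightarrow> w \<in> cfg_lang (walk_grammar h S M) (Q_nt c)"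
proof (induction "length w" arbitrary: w c rule: less_induct)
  case less
  let ?G = "walk_grammar h S M"
  have "w \<in> cfg_lang ?G (Q_nt (int i))" if "w \<in> meanders h S (int i)" "int i \<le> M" for i
    using that
  proof (induction i)
    case 0
    show ?case
    proof (cases w)
      case Nil
      show ?thesis
        unfolding Nil by (rule cfg_lang_rule) (auto simp: walk_grammar_def)
    next
      case (Cons s w')
      then have "s \<in> S" "0 \<le> h s" "w' \<in> meanders h S (h s)"
        using Cons_meanders_0 "0.prems"(1) by auto
      moreover have "h s \<le> M"
        using bound \<open>s \<in> S\<close> by force
      ultimately have "w' \<in> cfg_lang ?G (Q_nt (h s))"
        using less.hyps Cons by simp
      moreover have "(Q_nt 0, [Tm s, NT (Q_nt (h s))]) \<in> ?G"
        unfolding walk_grammar_def using \<open>s \<in> S\<close> \<open>0 \<le> h s\<close> by blast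
      ultimately show ?thesis
        unfolding Cons of_nat_0 by (elim cfg_lang_rule) force
    qed
  next
    case (Suc i)
    define c where "c = int (Suc i)"
    have "1 \<le> c" "c \<le> M" "w \<in> meanders h S c"
      using Suc.prems by (simp_all add: c_def)
    then consider "w \<in> meanders h S (c - 1)"
      | u v where "w = u @ v" "u \<noteq> []" "u \<in> descents h S c" "v \<in> meanders h S 0"
      using meanders_split by blast
    then show ?case
    proof cases
      case 1
      then have "w \<in> cfg_lang ?G (Q_nt (c - 1))"
        using Suc.IH \<open>c \<le> M\<close> by (simp add: c_def)
      moreover have "(Q_nt c, [NT (Q_nt (c - 1))]) \<in> ?G"
        unfolding walk_grammar_def atLeastAtMost_iff using \<open>1 \<le> c\<close> \<open>c \<le> M\<close> by blast
      ultimately show ?thesis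
        unfolding c_def[symmetric] by (elim cfg_lang_rule) force
    next
      case (2 u v)
      then have "u \<in> cfg_lang ?G (D_nt c)" "v \<in> cfg_lang ?G (Q_nt 0)"
        using descents_ascents_in_walk_grammar[OF bound, of u] less.hyps[of v] \<open>1 \<le> c\<close> \<open>c \<le> M\<close>
        by auto
      moreover have "(Q_nt c, [NT (D_nt c), NT (Q_nt 0)]) \<in> ?G"
        unfolding walk_grammar_def atLeastAtMost_iff using \<open>1 \<le> c\<close> \<open>c \<le> M\<close> by blast
      ultimately show ?thesis
        unfolding c_def[symmetric] \<open>w = u @ v\<close> by (elim cfg_lang_rule) force
    qed
  qed
  then show ?case
    using less.prems by (metis nonneg_int_cases)
qed

lemma cfg_lang_walk_grammar:
  assumes "\<forall>s \<in> S. \<bar>h s\<bar> \<le> M" and "0 \<le> M"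
  shows "cfg_lang (walk_grammar h S M) (Q_nt 0) = meanders h S 0"
  using cfg_lang_subset[OF walk_grammar_closed, of h S M "Q_nt 0"]
    meanders_in_walk_grammar[OF assms(1), of _ 0] assms(2)
  by (auto simp: nt_lang_Q_nt)

lemma setcompr3_subset_image:
  assumes "\<And>x y z. P x y z \<Longrightarrow> (x, y, z) \<in> A"
  shows "{f x y z | x y z. P x y z} \<subseteq> (\<lambda>(x, y, z). f x y z) ` A"
proof
  fix w
  assume "w \<in> {f x y z | x y z. P x y z}"
  then obtain x y z where "w = f x y z" "P x y z"
    by blast
  then show "w \<in> (\<lambda>(x, y, z). f x y z) ` A"
    using assms by (auto intro: rev_image_eqI[of "(x, y, z)"])
qed

lemma walk_grammar_subset:
  "walk_grammar h S M \<subseteq>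
     {(Q_nt 0, []), (D_nt 0, []), (U_nt 0, [])}
   \<union> (\<lambda>s. (Q_nt 0, [Tm s, NT (Q_nt (h s))])) ` S
   \<union> (\<lambda>c. (Q_nt c, [NT (D_nt c), NT (Q_nt 0)])) ` {1..M}
   \<union> (\<lambda>c. (Q_nt c, [NT (Q_nt (c - 1))])) ` {1..M}
   \<union> (\<lambda>(d, s, m). (D_nt d, [NT (D_nt (d - 1 - m)), NT (U_nt (- h s - 1 - m)), Tm s]))
       ` ({0..M} \<times> S \<times> {0..M})
   \<union> (\<lambda>(e, s, m). (U_nt e, [Tm s, NT (D_nt (h s - m)), NT (U_nt (e - m))]))
       ` ({0..M} \<times> S \<times> {0..M})"
  unfolding walk_grammar_def
  by (intro Un_mono subset_refl setcompr3_subset_image; auto)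

lemma card_Un_le_add: "card A \<le> a \<Longrightarrow> card B \<le> b \<Longrightarrow> card (A \<union> B) \<le> a + b"
  using card_Un_le[of A B] by linarith

lemma card_image_le_bound: "finite A \<Longrightarrow> card A \<le> n \<Longrightarrow> card (f ` A) \<le> n"
  using card_image_le[of A f] by linarith

lemma
  assumes "finite S"
  shows finite_walk_grammar: "finite (walk_grammar h S M)"
    and card_walk_grammar: "card (walk_grammar h S M) \<le> 3 * (card S + 1) * (nat M + 1)\<^sup>2"
proof -
  let ?n = "nat M"
  have "card {0..M} \<le> ?n + 1"
    by (cases "0 \<le> M") (simp_all add: nat_add_distrib)
  then have "card {0..M} * card S * card {0..M} \<le> (?n + 1) * card S * (?n + 1)"
    by (intro mult_le_mono) auto
  then have card_box: "card ({0..M} \<times> S \<times> {0..M}) \<le> card S * (?n + 1)\<^sup>2"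
    by (simp add: card_cartesian_product power2_eq_square algebra_simps)
  have "card (walk_grammar h S M)
      \<le> 3 + card S + ?n + ?n + card S * (?n + 1)\<^sup>2 + card S * (?n + 1)\<^sup>2"
    by (rule order_trans[OF card_mono[OF _ walk_grammar_subset]])
       (use assms in \<open>intro card_Un_le_add card_image_le_bound card_box finite_UnI finite_imageI
         finite_cartesian_product finite_atLeastAtMost_int card_insert_le_m1; simp\<close>)+
  also have "\<dots> \<le> 3 * (card S + 1) * (?n + 1)\<^sup>2"
    by (simp add: power2_eq_square algebra_simps)
  finally show "card (walk_grammar h S M) \<le> 3 * (card S + 1) * (?n + 1)\<^sup>2" .
  show "finite (walk_grammar h S M)"
    by (rule finite_subset[OF walk_grammar_subset]) (use assms in simp)
qed

lemma is_cfg_walk_grammar: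
  assumes "finite S" and bound: "\<forall>s \<in> S. \<bar>h s\<bar> \<le> M"
  shows "is_cfg {..<3 * nat M + 3} S (walk_grammar h S M) (Q_nt 0)"
proof -
  have nt_bound: "Q_nt c < 3 * nat M + 3" "D_nt c < 3 * nat M + 3" "U_nt c < 3 * nat M + 3"
    if "c \<le> 0 \<or> c \<le> M" for c
    using that by (auto simp: Q_nt_def D_nt_def U_nt_def dest: nat_mono)
  have "h s \<le> M \<and> - h s \<le> M" if "s \<in> S" for s
    using bound that by force
  then have "\<forall>(B, rhs) \<in> walk_grammar h S M. B < 3 * nat M + 3 \<and>
      (\<forall>x \<in> set rhs. case x of NT C \<Rightarrow> C < 3 * nat M + 3 | Tm t \<Rightarrow> t \<in> S)"
    unfolding walk_grammar_def by (auto intro!: nt_bound; fastforce)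
  then show ?thesis
    using finite_walk_grammar[OF assms(1), of h M]
    by (fastforce simp: is_cfg_def Q_nt_def split: sym.splits)
qed

lemma mem_H_rational_iff:
  assumes "cos t > 0" and "tan t = of_int p / of_int q" and "q > 0"
  shows "z \<in> H t \<longleftrightarrow> 0 \<le> p * fst z + q * snd z"
proof -
  obtain x y where z: "z = (x, y)"
    by fastforce
  have "sin t = of_int p / of_int q * cos t"
    using assms(1,2) by (simp add: tan_def field_simps)
  then have "of_int q * (of_int x * sin t + of_int y * cos t) = cos t * of_int (p * x + q * y)"
    using \<open>q > 0\<close> by (simp add: field_simps)
  moreover have "z \<in> H t \<longleftrightarrow> 0 \<le> of_int q * (of_int x * sin t + of_int y * cos t)"
    using \<open>q > 0\<close> by (simp add: H_def z zero_le_mult_iff)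
  moreover have "0 \<le> (of_int (p * x + q * y) :: real) \<longleftrightarrow> 0 \<le> p * x + q * y"
    by (rule of_int_0_le_iff)
  ultimately show ?thesis
    using \<open>cos t > 0\<close> by (simp add: z zero_le_mult_iff)
qed

lemma walks_H_rational:
  assumes "cos t > 0" and "tan t = of_int p / of_int q" and "q > 0"
  shows "walks (H t) S = meanders (\<lambda>s. p * fst s + q * snd s) S 0"
proof -
  have "height (\<lambda>s. p * fst s + q * snd s) 0 w k =
      p * fst (endpoint (take k w)) + q * snd (endpoint (take k w))" for w :: "step list" and k
    by (induction "take k w")
       (simp_all add: height_def endpoint_def sum_list_addf sum_list_const_mult)
  then show ?thesis
    using mem_H_rational_iff[OF assms] by (simp add: walks_def meanders_def)
qed

lemma rational_half_plane_grammar: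
  assumes "finite S" and "0 < q" and "0 \<le> M" and bound: "\<forall>s \<in> S. \<bar>p * fst s + q * snd s\<bar> \<le> M"
  obtains N :: "nat set" and R A where "is_cfg N S R A" "card N = 3 * nat M + 3"
    "card R \<le> 3 * (card S + 1) * (nat M + 1)\<^sup>2"
    "cfg_lang R A = walks (H (arctan (of_int p / of_int q))) S"
proof -
  let ?h = "\<lambda>s :: step. p * fst s + q * snd s"
  have "cos (arctan (of_int p / of_int q)) > 0"
    by (intro cos_gt_zero_pi arctan_lbound arctan_ubound)
  then have "walks (H (arctan (of_int p / of_int q))) S = meanders ?h S 0"
    using walks_H_rational[OF _ tan_arctan \<open>0 < q\<close>] by blast
  then show thesis
    using that is_cfg_walk_grammar[OF assms(1) bound] card_walk_grammar[OF assms(1)]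
      cfg_lang_walk_grammar[OF bound \<open>0 \<le> M\<close>]
    by simp
qed

lemma rational_approximation:
  fixes T \<delta> :: real
  assumes "0 \<le> T" and "0 < \<delta>"
  obtains p q :: int where "0 < q" "0 \<le> p" "of_int p + of_int q \<le> (T + 1) * (1 + 1 / \<delta>)"
    "\<bar>T - of_int p / of_int q\<bar> \<le> \<delta>"
proof
  define q where "q = \<lceil>1 / \<delta>\<rceil>"
  define p where "p = \<lfloor>T * of_int q\<rfloor>"
  have q_ge: "1 / \<delta> \<le> of_int q" and q_le: "of_int q \<le> 1 + 1 / \<delta>"
    unfolding q_def by linarith+
  moreover have "0 < 1 / \<delta>"
    using \<open>0 < \<delta>\<close> by simp
  ultimately show "0 < q"
    by linarith
  then show "0 \<le> p"
    unfolding p_def using \<open>0 \<le> T\<close> by simp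
  have p: "of_int p \<le> T * of_int q" "T * of_int q < of_int p + 1"
    unfolding p_def by linarith+
  have "of_int p + of_int q \<le> (T + 1) * of_int q"
    using p by (simp add: algebra_simps)
  also have "\<dots> \<le> (T + 1) * (1 + 1 / \<delta>)"
    using q_le \<open>0 \<le> T\<close> by (intro mult_left_mono) auto
  finally show "of_int p + of_int q \<le> (T + 1) * (1 + 1 / \<delta>)" .
  have "T - of_int p / of_int q = (T * of_int q - of_int p) / of_int q"
    using \<open>0 < q\<close> by (simp add: field_simps)
  moreover have "0 \<le> (T * of_int q - of_int p) / of_int q"
    using p \<open>0 < q\<close> by simp
  moreover have "(T * of_int q - of_int p) / of_int q \<le> 1 / of_int q"
    using p \<open>0 < q\<close> by (intro divide_right_mono) auto
  moreover have "1 / of_int q \<le> \<delta>"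
    using q_ge \<open>0 < \<delta>\<close> \<open>0 < q\<close> by (simp add: field_simps)
  ultimately show "\<bar>T - of_int p / of_int q\<bar> \<le> \<delta>"
    by simp
qed

lemma grammar_size_bounds:
  fixes K L M \<delta> :: real
  assumes "0 \<le> K" "0 \<le> L" "0 \<le> M" "0 < \<delta>" "M \<le> K * (1 + 1 / \<delta>)"
  shows "3 * M + 3 \<le> (3 * K + 3 + 2 * L * (K + 1)\<^sup>2) * (1 + 1 / \<delta>)"
    and "L * (M + 1)\<^sup>2 \<le> (3 * K + 3 + 2 * L * (K + 1)\<^sup>2) * (1 + 1 / \<delta>\<^sup>2)"
proof -
  let ?X = "1 + 1 / \<delta>"
  have "1 \<le> ?X"
    using \<open>0 < \<delta>\<close> by simp
  have "3 * M + 3 \<le> 3 * (K * ?X) + 3 * ?X"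
    by (rule add_mono) (use assms(5) \<open>1 \<le> ?X\<close> in auto)
  also have "\<dots> = (3 * K + 3) * ?X"
    by (simp add: algebra_simps)
  also have "\<dots> \<le> (3 * K + 3 + 2 * L * (K + 1)\<^sup>2) * ?X"
    by (rule mult_right_mono) (use \<open>0 \<le> L\<close> \<open>1 \<le> ?X\<close> in auto)
  finally show "3 * M + 3 \<le> (3 * K + 3 + 2 * L * (K + 1)\<^sup>2) * ?X" .
  have "M + 1 \<le> K * ?X + ?X"
    using assms(5) \<open>1 \<le> ?X\<close> by (rule add_mono)
  then have "M + 1 \<le> (K + 1) * ?X"
    by (simp only: distrib_right mult_1_left)
  then have "(M + 1)\<^sup>2 \<le> (K + 1)\<^sup>2 * ?X\<^sup>2"
    unfolding power_mult_distrib[symmetric] using \<open>0 \<le> M\<close> by (intro power_mono) auto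
  moreover have "(1 + y)\<^sup>2 \<le> 2 * (1 + y\<^sup>2)" for y :: real
  proof -
    have "0 \<le> (1 - y)\<^sup>2"
      by simp
    then show ?thesis
      by (simp add: power2_eq_square algebra_simps)
  qed
  ultimately have "(M + 1)\<^sup>2 \<le> (K + 1)\<^sup>2 * (2 * (1 + 1 / \<delta>\<^sup>2))"
    by (smt (verit) mult_left_mono power_one_over zero_le_power2)
  then have "L * (M + 1)\<^sup>2 \<le> 2 * L * (K + 1)\<^sup>2 * (1 + 1 / \<delta>\<^sup>2)"
    using \<open>0 \<le> L\<close> by (metis mult_left_mono mult.assoc mult.left_commute)
  also have "\<dots> \<le> (3 * K + 3 + 2 * L * (K + 1)\<^sup>2) * (1 + 1 / \<delta>\<^sup>2)"
    using \<open>0 \<le> K\<close> by (intro mult_right_mono) auto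
  finally show "L * (M + 1)\<^sup>2 \<le> (3 * K + 3 + 2 * L * (K + 1)\<^sup>2) * (1 + 1 / \<delta>\<^sup>2)" .
qed

lemma abs_linear_form_le:
  fixes p q x y :: "'a :: linordered_idom"
  shows "\<bar>p * x + q * y\<bar> \<le> (\<bar>p\<bar> + \<bar>q\<bar>) * (\<bar>x\<bar> + \<bar>y\<bar>)"
proof -
  have "\<bar>p * x + q * y\<bar> \<le> \<bar>p\<bar> * \<bar>x\<bar> + \<bar>q\<bar> * \<bar>y\<bar>"
    by (metis abs_mult abs_triangle_ineq)
  also have "\<dots> \<le> (\<bar>p\<bar> + \<bar>q\<bar>) * (\<bar>x\<bar> + \<bar>y\<bar>)"
    by (simp add: algebra_simps)
  finally show ?thesis .
qed

lemma finite_steps_bounded: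
  assumes "finite S"
  obtains B :: int where "1 \<le> B" "\<forall>s \<in> S. \<bar>fst s\<bar> + \<bar>snd s\<bar> \<le> B"
proof
  show "1 \<le> 1 + (\<Sum>s \<in> S. \<bar>fst s\<bar> + \<bar>snd s\<bar>)"
    by (simp add: sum_nonneg)
  show "\<forall>s \<in> S. \<bar>fst s\<bar> + \<bar>snd s\<bar> \<le> 1 + (\<Sum>s \<in> S. \<bar>fst s\<bar> + \<bar>snd s\<bar>)"
    using member_le_sum[of _ S "\<lambda>s. \<bar>fst s\<bar> + \<bar>snd s\<bar>"] assms by fastforce
qed

lemma approximating_walk_grammar:
  fixes T \<delta> :: real and B :: int
  assumes "finite S" and "0 \<le> T" and "0 < \<delta>"
    and "1 \<le> B" and B: "\<forall>s \<in> S. \<bar>fst s\<bar> + \<bar>snd s\<bar> \<le> B"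
  obtains N :: "nat set" and R A \<theta>r and M :: int where
    "is_cfg N S R A" "cfg_lang R A = walks (H \<theta>r) S"
    "0 \<le> M" "of_int M \<le> (T + 1) * of_int B * (1 + 1 / \<delta>)"
    "real (card N) = 3 * of_int M + 3" "real (card R) \<le> 3 * (real (card S) + 1) * (of_int M + 1)\<^sup>2"
    "- (pi / 2) < \<theta>r" "\<theta>r < pi / 2" "tan \<theta>r \<in> \<rat>" "\<bar>T - tan \<theta>r\<bar> \<le> \<delta>"
proof -
  obtain p q where "0 < q" "0 \<le> p" and pq: "of_int p + of_int q \<le> (T + 1) * (1 + 1 / \<delta>)"
    and approx: "\<bar>T - of_int p / of_int q\<bar> \<le> \<delta>"
    by (rule rational_approximation[OF \<open>0 \<le> T\<close> \<open>0 < \<delta>\<close>])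
  define M where "M = (p + q) * B"
  have "0 \<le> M"
    using \<open>0 < q\<close> \<open>0 \<le> p\<close> \<open>1 \<le> B\<close> by (simp add: M_def)
  have bound: "\<forall>s \<in> S. \<bar>p * fst s + q * snd s\<bar> \<le> M"
  proof
    fix s
    assume "s \<in> S"
    have "\<bar>p * fst s + q * snd s\<bar> \<le> (\<bar>p\<bar> + \<bar>q\<bar>) * (\<bar>fst s\<bar> + \<bar>snd s\<bar>)"
      by (rule abs_linear_form_le)
    also have "\<dots> \<le> (p + q) * B"
      using B \<open>s \<in> S\<close> \<open>0 < q\<close> \<open>0 \<le> p\<close> by (simp add: mult_left_mono)
    finally show "\<bar>p * fst s + q * snd s\<bar> \<le> M"
      by (simp add: M_def)
  qed
  have "of_int M \<le> (T + 1) * of_int B * (1 + 1 / \<delta>)"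
    using mult_right_mono[OF pq, of "of_int B"] \<open>1 \<le> B\<close> by (simp add: M_def mult_ac)
  obtain N :: "nat set" and R A where "is_cfg N S R A" "card N = 3 * nat M + 3"
    "card R \<le> 3 * (card S + 1) * (nat M + 1)\<^sup>2"
    "cfg_lang R A = walks (H (arctan (of_int p / of_int q))) S"
    by (rule rational_half_plane_grammar[OF assms(1) \<open>0 < q\<close> \<open>0 \<le> M\<close> bound])
  have "real (card R) \<le> real (3 * (card S + 1) * (nat M + 1)\<^sup>2)"
    using \<open>card R \<le> _\<close> by (rule of_nat_mono)
  also have "\<dots> = 3 * (real (card S) + 1) * (of_int M + 1)\<^sup>2"
    using \<open>0 \<le> M\<close> by (simp add: add.commute)
  finally show thesis
    using \<open>is_cfg N S R A\<close> \<open>card N = _\<close> \<open>cfg_lang R A = _\<close> \<open>0 \<le> M\<close> \<open>of_int M \<le> _\<close> approx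
      arctan_lbound[of "of_int p / of_int q"] arctan_ubound[of "of_int p / of_int q"]
    by (intro that[of N R A "arctan (of_int p / of_int q)" M]) (simp_all add: tan_arctan)
qed

theorem mainTheorem8:
  fixes S :: "step set" and \<theta> :: real
  assumes "finite S" and "0 \<le> \<theta>" and "\<theta> < pi / 2"
  shows "\<exists>C > 0. \<forall>\<delta> > 0. \<exists>(N :: nat set) R A \<theta>r.
           is_cfg N S R A \<and>
           real (card N) \<le> C * (1 + 1 / \<delta>) \<and>
           real (card R) \<le> C * (1 + 1 / \<delta>\<^sup>2) \<and>
           - (pi / 2) < \<theta>r \<and> \<theta>r < pi / 2 \<and>
           tan \<theta>r \<in> \<rat> \<and> \<bar>tan \<theta> - tan \<theta>r\<bar> \<le> \<delta> \<and>
           cfg_lang R A = walks (H \<theta>r) S"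
proof -
  obtain B where "1 \<le> B" and B: "\<forall>s \<in> S. \<bar>fst s\<bar> + \<bar>snd s\<bar> \<le> B"
    by (rule finite_steps_bounded[OF assms(1)])
  have "0 \<le> tan \<theta>"
    using assms(2,3) tan_gt_zero[of \<theta>] by (cases "\<theta> = 0") auto
  define K where "K = (tan \<theta> + 1) * of_int B"
  define L where "L = 3 * (real (card S) + 1)"
  define C where "C = 3 * K + 3 + 2 * L * (K + 1)\<^sup>2"
  have "0 \<le> K" "0 \<le> L"
    using \<open>0 \<le> tan \<theta>\<close> \<open>1 \<le> B\<close> by (simp_all add: K_def L_def)
  show ?thesis
  proof (intro exI[of _ C] conjI allI impI)
    show "0 < C"
      using \<open>0 \<le> K\<close> \<open>0 \<le> L\<close> by (simp add: C_def add_pos_nonneg)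
    fix \<delta> :: real
    assume "0 < \<delta>"
    obtain N :: "nat set" and R A \<theta>r and M :: int
      where grammar: "is_cfg N S R A" "cfg_lang R A = walks (H \<theta>r) S"
      and "0 \<le> M" "of_int M \<le> K * (1 + 1 / \<delta>)"
      and "real (card N) = 3 * of_int M + 3" "real (card R) \<le> L * (of_int M + 1)\<^sup>2"
      and slope: "- (pi / 2) < \<theta>r" "\<theta>r < pi / 2" "tan \<theta>r \<in> \<rat>" "\<bar>tan \<theta> - tan \<theta>r\<bar> \<le> \<delta>"
      unfolding K_def L_def
      by (rule approximating_walk_grammar[OF assms(1) \<open>0 \<le> tan \<theta>\<close> \<open>0 < \<delta>\<close> \<open>1 \<le> B\<close> B])
    note size = grammar_size_bounds[OF \<open>0 \<le> K\<close> \<open>0 \<le> L\<close> of_int_nonneg[OF \<open>0 \<le> M\<close>] \<open>0 < \<delta>\<close>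
        \<open>of_int M \<le> _\<close>, folded C_def]
    have card_N: "real (card N) \<le> C * (1 + 1 / \<delta>)"
      using size(1) \<open>real (card N) = _\<close> by simp
    have card_R: "real (card R) \<le> C * (1 + 1 / \<delta>\<^sup>2)"
      using size(2) \<open>real (card R) \<le> _\<close> by linarith
    show "\<exists>(N :: nat set) R A \<theta>r. is_cfg N S R A \<and>
        real (card N) \<le> C * (1 + 1 / \<delta>) \<and> real (card R) \<le> C * (1 + 1 / \<delta>\<^sup>2) \<and>
        - (pi / 2) < \<theta>r \<and> \<theta>r < pi / 2 \<and> tan \<theta>r \<in> \<rat> \<and> \<bar>tan \<theta> - tan \<theta>r\<bar> \<le> \<delta> \<and>
        cfg_lang R A = walks (H \<theta>r) S"
      by (intro exI[of _ N] exI[of _ R] exI[of _ A] exI[of _ \<theta>r] conjI grammar slope card_N card_R)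
  qed
qed

end
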